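(* For every problem $\alpha$ of QHC, $\neg\nabla\alpha\Leftrightarrow\neg\alpha\Leftrightarrow\nabla\neg\alpha$.
   Context: QHC is a two-sorted first-order calculus. Its only terms are individual variables. Every formula is either a problem (denoted by Greek letters $\alpha,\beta,\gamma,\dots$) or a proposition (denoted by Latin letters $p,q,\dots$). Atomic formulas are proposition variables $p(t_1,\dots,t_n)$ (of proposition type), problem variables $\pi(t_1,\dots,t_n)$ (of problem type), and the constants $0$ (a proposition, classical falsity) and $\bot$ (a problem, intuitionistic absurdity). Propositions are closed under the classical connectives $\land,\lor,\to$ and quantifiers $\exists,\forall$; problems are closed under the intuitionistic connectives $\land,\lor,\to$ and quantifiers $\exists,\forall$ (the same symbols are used, distinguished by the type of the arguments). $\neg p$ abbreviates $p\to 0$, $\neg\alpha$ abbreviates $\alpha\to\bot$, and $\leftrightarrow$ is defined as usual. There are two type-conversion operators: if $p$ is a proposition then $!p$ is a problem, and if $\alpha$ is a problem then $?\alpha$ is a proposition. Deductive system of QHC: all axioms and rules of classical predicate logic applied to all propositions; all postulates and rules of intuitionistic predicate logic applied to all problems; the rules $p\,/\,!p$ and $\alpha\,/\,?\alpha$; and the schemas $?!p\to p$; $\alpha\to\, !?\alpha$; $!(p\to q)\to(!p\to !q)$; $?(\alpha\to\beta)\to(?\alpha\to ?\beta)$; $!0\to\bot$; $?(\alpha\land\beta)\leftrightarrow ?\alpha\land ?\beta$; $?(\alpha\lor\beta)\leftrightarrow ?\alpha\lor ?\beta$; $?\bot\to 0$; $?\exists x\,\alpha(x)\leftrightarrow\exists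 x\,?\alpha(x)$; $?\forall x\,\alpha(x)\to\forall x\,?\alpha(x)$ (usual variable side conditions implicit). $\vdash A$ means $A$ is derivable in QHC; $A\Rightarrow B$ means $\vdash A\to B$ and $A\Leftrightarrow B$ means $\vdash A\leftrightarrow B$ (with $A,B$ of the same type); $A\vdash B$ means $B$ is derivable in QHC from the premise $A$. Notation: $\Box p := ?!p$ (a proposition) and $\nabla\alpha := !?\alpha$ (a problem). QC and QH denote classical and intuitionistic predicate calculus. *)

theory Defs
  imports Main
begin

text \<open>Individual variables are natural numbers (de Bruijn indices); the only terms are
variables.\<close>

datatype qprop =
    PVar nat "nat list"
  | PZero
  | PAnd qprop qprop
  | POr qprop qprop
  | PImp qprop qprop
  | PEx qprop                  \<comment> \<open>binds de Bruijn index 0\<close>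
  | PAll qprop
  | Quest qprob
and qprob =
    QVar nat "nat list"
  | QBot
  | QAnd qprob qprob
  | QOr qprob qprob
  | QImp qprob qprob
  | QEx qprob
  | QAll qprob
  | Bang qprop

definition shift_ren :: "(nat \<Rightarrow> nat) \<Rightarrow> nat \<Rightarrow> nat" where
  "shift_ren f n = (case n of 0 \<Rightarrow> 0 | Suc m \<Rightarrow> Suc (f m))"

primrec renP :: "(nat \<Rightarrow> nat) \<Rightarrow> qprop \<Rightarrow> qprop"
and renQ :: "(nat \<Rightarrow> nat) \<Rightarrow> qprob \<Rightarrow> qprob" where
  "renP f (PVar P ts) = PVar P (map f ts)"
| "renP f PZero = PZero"
| "renP f (PAnd p q) = PAnd (renP f p) (renP f q)"
| "renP f (POr p q) = POr (renP f p) (renP f q)"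
| "renP f (PImp p q) = PImp (renP f p) (renP f q)"
| "renP f (PEx p) = PEx (renP (shift_ren f) p)"
| "renP f (PAll p) = PAll (renP (shift_ren f) p)"
| "renP f (Quest a) = Quest (renQ f a)"
| "renQ f (QVar P ts) = QVar P (map f ts)"
| "renQ f QBot = QBot"
| "renQ f (QAnd a b) = QAnd (renQ f a) (renQ f b)"
| "renQ f (QOr a b) = QOr (renQ f a) (renQ f b)"
| "renQ f (QImp a b) = QImp (renQ f a) (renQ f b)"
| "renQ f (QEx a) = QEx (renQ (shift_ren f) a)"
| "renQ f (QAll a) = QAll (renQ (shift_ren f) a)"
| "renQ f (Bang p) = Bang (renP f p)"

text \<open>Instantiation of the bound variable (index 0) by the variable y: A(x) to A(y).\<close>
definition inst :: "nat \<Rightarrow> nat \<Rightarrow> nat" where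
  "inst y n = (case n of 0 \<Rightarrow> y | Suc m \<Rightarrow> m)"

definition PNeg :: "qprop \<Rightarrow> qprop" where "PNeg p = PImp p PZero"
definition QNeg :: "qprob \<Rightarrow> qprob" where "QNeg a = QImp a QBot"
definition PIff :: "qprop \<Rightarrow> qprop \<Rightarrow> qprop" where
  "PIff p q = PAnd (PImp p q) (PImp q p)"
definition QIff :: "qprob \<Rightarrow> qprob \<Rightarrow> qprob" where
  "QIff a b = QAnd (QImp a b) (QImp b a)"

definition Box :: "qprop \<Rightarrow> qprop" where "Box p = Quest (Bang p)"
definition Nabla :: "qprob \<Rightarrow> qprob" where "Nabla a = Bang (Quest a)"

text \<open>Quantifier rules in de Bruijn form: the eigenvariable is index 0 and the side formula is
lifted by renP Suc (so it does not contain the eigenvariable).\<close>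

inductive thmP :: "qprop \<Rightarrow> bool" and thmQ :: "qprob \<Rightarrow> bool" where
  P_K: "thmP (PImp p (PImp q p))"
| P_S: "thmP (PImp (PImp p (PImp q r)) (PImp (PImp p q) (PImp p r)))"
| P_conjE1: "thmP (PImp (PAnd p q) p)"
| P_conjE2: "thmP (PImp (PAnd p q) q)"
| P_conjI: "thmP (PImp p (PImp q (PAnd p q)))"
| P_disjI1: "thmP (PImp p (POr p q))"
| P_disjI2: "thmP (PImp q (POr p q))"
| P_disjE: "thmP (PImp (PImp p r) (PImp (PImp q r) (PImp (POr p q) r)))"
| P_efq: "thmP (PImp PZero p)"
| P_dne: "thmP (PImp (PNeg (PNeg p)) p)"
| P_allE: "thmP (PImp (PAll p) (renP (inst y) p))"
| P_exI: "thmP (PImp (renP (inst y) p) (PEx p))"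
| P_mp: "thmP (PImp p q) \<Longrightarrow> thmP p \<Longrightarrow> thmP q"
| P_allI: "thmP (PImp (renP Suc q) p) \<Longrightarrow> thmP (PImp q (PAll p))"
| P_exE: "thmP (PImp p (renP Suc q)) \<Longrightarrow> thmP (PImp (PEx p) q)"
| Q_K: "thmQ (QImp a (QImp b a))"
| Q_S: "thmQ (QImp (QImp a (QImp b c)) (QImp (QImp a b) (QImp a c)))"
| Q_conjE1: "thmQ (QImp (QAnd a b) a)"
| Q_conjE2: "thmQ (QImp (QAnd a b) b)"
| Q_conjI: "thmQ (QImp a (QImp b (QAnd a b)))"
| Q_disjI1: "thmQ (QImp a (QOr a b))"
| Q_disjI2: "thmQ (QImp b (QOr a b))"
| Q_disjE: "thmQ (QImp (QImp a c) (QImp (QImp b c) (QImp (QOr a b) c)))"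
| Q_efq: "thmQ (QImp QBot a)"
| Q_allE: "thmQ (QImp (QAll a) (renQ (inst y) a))"
| Q_exI: "thmQ (QImp (renQ (inst y) a) (QEx a))"
| Q_mp: "thmQ (QImp a b) \<Longrightarrow> thmQ a \<Longrightarrow> thmQ b"
| Q_allI: "thmQ (QImp (renQ Suc b) a) \<Longrightarrow> thmQ (QImp b (QAll a))"
| Q_exE: "thmQ (QImp a (renQ Suc b)) \<Longrightarrow> thmQ (QImp (QEx a) b)"
| R_bang: "thmP p \<Longrightarrow> thmQ (Bang p)"
| R_quest: "thmQ a \<Longrightarrow> thmP (Quest a)"
| X_box: "thmP (PImp (Quest (Bang p)) p)"
| X_nabla: "thmQ (QImp a (Bang (Quest a)))"
| X_bang_imp: "thmQ (QImp (Bang (PImp p q)) (QImp (Bang p) (Bang q)))"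
| X_quest_imp: "thmP (PImp (Quest (QImp a b)) (PImp (Quest a) (Quest b)))"
| X_bang_zero: "thmQ (QImp (Bang PZero) QBot)"
| X_quest_and: "thmP (PIff (Quest (QAnd a b)) (PAnd (Quest a) (Quest b)))"
| X_quest_or: "thmP (PIff (Quest (QOr a b)) (POr (Quest a) (Quest b)))"
| X_quest_bot: "thmP (PImp (Quest QBot) PZero)"
| X_quest_ex: "thmP (PIff (Quest (QEx a)) (PEx (Quest a)))"
| X_quest_all: "thmP (PImp (Quest (QAll a)) (PAll (Quest a)))"

end

theory Submission
  imports Defs
begin

text \<open>The schema \<alpha> \<rightarrow> \<nabla>\<alpha> gives \<not>\<nabla>\<alpha> \<Rightarrow> \<not>\<alpha> by contraposition and \<not>\<alpha> \<Rightarrow> \<nabla>\<not>\<alpha> directly.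
For the converse directions, both type conversions map a negation into the negation of the
image: ?\<not>\<alpha> \<Rightarrow> \<not>?\<alpha> by the schemas for ?(\<alpha> \<rightarrow> \<beta>) and ?\<bottom>, and !\<not>p \<Rightarrow> \<not>!p by those for
!(p \<rightarrow> q) and !0. Composing, \<nabla>\<not>\<alpha> \<Rightarrow> \<not>\<nabla>\<alpha>, and \<not>\<nabla>\<alpha> \<Rightarrow> \<not>\<alpha> closes both cycles.\<close>

lemma thmQ_imp_trans: "thmQ (QImp a b) \<Longrightarrow> thmQ (QImp b c) \<Longrightarrow> thmQ (QImp a c)"
  by (meson Q_K Q_S Q_mp)

lemma thmQ_imp_contrapos: "thmQ (QImp a b) \<Longrightarrow> thmQ (QImp (QImp b c) (QImp a c))"
  by (meson Q_K Q_S Q_mp)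

lemma thmQ_imp_mono_concl:
  "thmQ (QImp x (QImp y z)) \<Longrightarrow> thmQ (QImp z w) \<Longrightarrow> thmQ (QImp x (QImp y w))"
  by (meson Q_K Q_S Q_mp thmQ_imp_trans)

lemma thmP_imp_mono_concl:
  "thmP (PImp x (PImp y z)) \<Longrightarrow> thmP (PImp z w) \<Longrightarrow> thmP (PImp x (PImp y w))"
  by (meson P_K P_S P_mp)

lemma thmQ_iffI: "thmQ (QImp a b) \<Longrightarrow> thmQ (QImp b a) \<Longrightarrow> thmQ (QIff a b)"
  unfolding QIff_def by (meson Q_conjI Q_mp)

lemma imp_Nabla: "thmQ (QImp a (Nabla a))"
  unfolding Nabla_def by (rule X_nabla)

lemma Quest_QNeg_imp: "thmP (PImp (Quest (QNeg a)) (PNeg (Quest a)))"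
  unfolding QNeg_def PNeg_def using thmP_imp_mono_concl[OF X_quest_imp X_quest_bot] .

lemma Bang_PNeg_imp: "thmQ (QImp (Bang (PNeg p)) (QNeg (Bang p)))"
  unfolding QNeg_def PNeg_def using thmQ_imp_mono_concl[OF X_bang_imp X_bang_zero] .

lemma Nabla_QNeg_imp_QNeg_Nabla: "thmQ (QImp (Nabla (QNeg a)) (QNeg (Nabla a)))"
proof -
  have "thmQ (QImp (Nabla (QNeg a)) (Bang (PNeg (Quest a))))"
    unfolding Nabla_def using Q_mp[OF X_bang_imp R_bang[OF Quest_QNeg_imp]] .
  then show ?thesis
    unfolding Nabla_def using thmQ_imp_trans Bang_PNeg_imp by blast
qed

theorem corollary2p10:
  fixes a :: qprob
  shows "thmQ (QIff (QNeg (Nabla a)) (QNeg a)) \<and> thmQ (QIff (QNeg a) (Nabla (QNeg a)))"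
proof -
  have neg_Nabla_imp_neg: "thmQ (QImp (QNeg (Nabla a)) (QNeg a))"
    unfolding QNeg_def using thmQ_imp_contrapos[OF imp_Nabla] .
  have neg_imp_neg_Nabla: "thmQ (QImp (QNeg a) (QNeg (Nabla a)))"
    using thmQ_imp_trans[OF imp_Nabla Nabla_QNeg_imp_QNeg_Nabla] .
  have Nabla_neg_imp_neg: "thmQ (QImp (Nabla (QNeg a)) (QNeg a))"
    using thmQ_imp_trans[OF Nabla_QNeg_imp_QNeg_Nabla neg_Nabla_imp_neg] .
  show ?thesis
    using thmQ_iffI neg_Nabla_imp_neg neg_imp_neg_Nabla Nabla_neg_imp_neg imp_Nabla by blast
qed

end
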